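(* In $\mathcal{A}_q(1,4)$ we have $X_\delta=q^{-1}X_4^2X_1-q^{-2}\big(q^{-1}X_3+q^{-\frac12}+q^{\frac12}\big)X_2^2$.
   Context: Let $\mathcal{T}$ be the quantum torus over $\mathbb{Z}[q^{\pm\frac12}]$ generated by $X_1^{\pm1},X_2^{\pm1}$ with $X_1X_2=qX_2X_1$, with skew field of fractions $\mathcal{F}$. Define $X_k\in\mathcal{F}$ ($k\in\mathbb{Z}$) by $X_{k-1}X_{k+1}=q^{\frac12}X_k+1$ for $k$ odd and $X_{k-1}X_{k+1}=q^2X_k^4+1$ for $k$ even; $\mathcal{A}_q(1,4)$ is the $\mathbb{Z}[q^{\pm\frac12}]$-subalgebra of $\mathcal{F}$ generated by all $X_k$. Put $X^{(a,b)}=q^{-\frac12ab}X_1^aX_2^b$ and $X_\delta=X^{(-1,-2)}+X^{(-1,2)}+X^{(1,-2)}+(q^{-\frac12}+q^{\frac12})X^{(0,-2)}$. *)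

theory Defs
  imports "HOL-Library.Poly_Mapping"
begin

text \<open>Quantum torus T over Z[t, t^-1] with t = q^(1/2), generated by X1^{+-1}, X2^{+-1}
  with X1 X2 = q X2 X1.  An element is a finitely supported integer combination of the
  basis monomials t^c X1^a X2^b, encoded by the key (c, a, b) :: int * int * int.
  Since X2^b X1^a' = q^(-b a') X1^a' X2^b, the product of basis monomials is
  (c, a, b) * (c', a', b') = (c + c' - 2 b a', a + a', b + b').\<close>

type_synonym qtorus = "(int \<times> int \<times> int) \<Rightarrow>\<^sub>0 int"

definition tw :: "int \<times> int \<times> int \<Rightarrow> int \<times> int \<times> int \<Rightarrow> int \<times> int \<times> int" where
  "tw u v = (case u of (c, a, b) \<Rightarrow> case v of (c', a', b') \<Rightarrow>
              (c + c' - 2 * b * a', a + a', b + b'))"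

definition qmult :: "qtorus \<Rightarrow> qtorus \<Rightarrow> qtorus" (infixl "\<odot>" 70) where
  "p \<odot> r = (\<Sum>u\<in>Poly_Mapping.keys p. \<Sum>v\<in>Poly_Mapping.keys r. Poly_Mapping.single (tw u v) (Poly_Mapping.lookup p u * Poly_Mapping.lookup r v))"

definition mon :: "int \<Rightarrow> int \<Rightarrow> int \<Rightarrow> qtorus" where
  "mon c a b = Poly_Mapping.single (c, a, b) 1"

definition tpow :: "int \<Rightarrow> qtorus" where
  "tpow c = mon c 0 0"

definition qone :: qtorus where "qone = mon 0 0 0"

definition X1 :: qtorus where "X1 = mon 0 1 0"
definition X2 :: qtorus where "X2 = mon 0 0 1"

text \<open>X^(a,b) = q^(-ab/2) X1^a X2^b\<close>
definition Xv :: "int \<Rightarrow> int \<Rightarrow> qtorus" where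
  "Xv a b = mon (- (a * b)) a b"

definition Xdelta :: qtorus where
  "Xdelta = Xv (-1) (-2) + Xv (-1) 2 + Xv 1 (-2) + (tpow (-1) + tpow 1) \<odot> Xv 0 (-2)"

end

theory Submission
  imports Defs
begin

text \<open>The quantum torus is associative and every monomial is a unit, so the two exchange
  relations determine the cluster variables as Laurent polynomials:
  X3 = X1^-1 (q^2 X2^4 + 1) has two terms and X4 = X2^-1 (q^(1/2) X3 + 1) has three.
  Substituting them, both sides of the identity expand to the same four monomials.\<close>

lemma qmult_eq_sum_superset:
  assumes "finite A" "finite B" "Poly_Mapping.keys p \<subseteq> A" "Poly_Mapping.keys r \<subseteq> B"
  shows "p \<odot> r = (\<Sum>u\<in>A. \<Sum>v\<in>B.
           Poly_Mapping.single (tw u v) (Poly_Mapping.lookup p u * Poly_Mapping.lookup r v))"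
proof -
  have "p \<odot> r = (\<Sum>u\<in>A. \<Sum>v\<in>Poly_Mapping.keys r.
           Poly_Mapping.single (tw u v) (Poly_Mapping.lookup p u * Poly_Mapping.lookup r v))"
    unfolding qmult_def
    by (rule sum.mono_neutral_left) (use assms in \<open>auto simp: in_keys_iff\<close>)
  also have "\<dots> = (\<Sum>u\<in>A. \<Sum>v\<in>B.
           Poly_Mapping.single (tw u v) (Poly_Mapping.lookup p u * Poly_Mapping.lookup r v))"
    by (rule sum.cong[OF refl], rule sum.mono_neutral_left)
       (use assms in \<open>auto simp: in_keys_iff\<close>)
  finally show ?thesis .
qed

lemma qmult_add_left: "(p + q) \<odot> r = p \<odot> r + q \<odot> r"
proof -
  let ?A = "Poly_Mapping.keys p \<union> Poly_Mapping.keys q" and ?B = "Poly_Mapping.keys r"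
  let ?expand = "\<lambda>s. \<Sum>u\<in>?A. \<Sum>v\<in>?B.
                   Poly_Mapping.single (tw u v) (Poly_Mapping.lookup s u * Poly_Mapping.lookup r v)"
  have "(p + q) \<odot> r = ?expand (p + q)" "p \<odot> r = ?expand p" "q \<odot> r = ?expand q"
    using keys_add[of p q] by (auto intro!: qmult_eq_sum_superset)
  then show ?thesis
    by (simp add: lookup_add distrib_right single_add sum.distrib)
qed

lemma qmult_add_right: "r \<odot> (p + q) = r \<odot> p + r \<odot> q"
proof -
  let ?A = "Poly_Mapping.keys r" and ?B = "Poly_Mapping.keys p \<union> Poly_Mapping.keys q"
  let ?expand = "\<lambda>s. \<Sum>u\<in>?A. \<Sum>v\<in>?B.
                   Poly_Mapping.single (tw u v) (Poly_Mapping.lookup r u * Poly_Mapping.lookup s v)"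
  have "r \<odot> (p + q) = ?expand (p + q)" "r \<odot> p = ?expand p" "r \<odot> q = ?expand q"
    using keys_add[of p q] by (auto intro!: qmult_eq_sum_superset)
  then show ?thesis
    by (simp add: lookup_add distrib_left single_add sum.distrib)
qed

lemma qmult_zero_left [simp]: "0 \<odot> r = 0"
  by (simp add: qmult_def)

lemma qmult_zero_right [simp]: "r \<odot> 0 = 0"
  by (simp add: qmult_def)

lemma qmult_minus_left: "(- p) \<odot> r = - (p \<odot> r)"
proof -
  have "p \<odot> r + (- p) \<odot> r = 0"
    by (simp only: qmult_add_left[symmetric] add.right_inverse qmult_zero_left)
  then show ?thesis
    by (simp add: eq_neg_iff_add_eq_0 add.commute)
qed

lemma qmult_diff_left: "(p - q) \<odot> r = p \<odot> r - q \<odot> r"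
  by (simp only: diff_conv_add_uminus qmult_add_left qmult_minus_left)

lemma qmult_sum_left: "(\<Sum>i\<in>I. f i) \<odot> r = (\<Sum>i\<in>I. f i \<odot> r)"
  by (induction I rule: infinite_finite_induct) (auto simp: qmult_add_left)

lemma qmult_sum_right: "r \<odot> (\<Sum>i\<in>I. f i) = (\<Sum>i\<in>I. r \<odot> f i)"
  by (induction I rule: infinite_finite_induct) (auto simp: qmult_add_right)

lemma single_qmult_single:
  "Poly_Mapping.single u a \<odot> Poly_Mapping.single v b = Poly_Mapping.single (tw u v) (a * b)"
  using qmult_eq_sum_superset[of "{u}" "{v}" "Poly_Mapping.single u a" "Poly_Mapping.single v b"]
  by simp

lemma poly_mapping_sum_single:
  "p = (\<Sum>u\<in>Poly_Mapping.keys p. Poly_Mapping.single u (Poly_Mapping.lookup p u))"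
proof (rule poly_mapping_eqI)
  fix k
  show "Poly_Mapping.lookup p k =
    Poly_Mapping.lookup (\<Sum>u\<in>Poly_Mapping.keys p. Poly_Mapping.single u (Poly_Mapping.lookup p u)) k"
    by (cases "k \<in> Poly_Mapping.keys p")
       (auto simp: lookup_sum lookup_single when_def in_keys_iff sum.delta)
qed

lemma tw_assoc: "tw (tw u v) w = tw u (tw v w)"
  by (cases u; cases v; cases w) (simp add: tw_def algebra_simps)

lemma qmult_assoc: "(p \<odot> q) \<odot> r = p \<odot> (q \<odot> r)"
proof -
  let ?P = "\<lambda>s. \<Sum>u\<in>Poly_Mapping.keys s. Poly_Mapping.single u (Poly_Mapping.lookup s u)"
  have "(?P p \<odot> ?P q) \<odot> ?P r = ?P p \<odot> (?P q \<odot> ?P r)"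
    by (simp add: qmult_sum_left qmult_sum_right single_qmult_single tw_assoc mult.assoc)
  then show ?thesis
    by (simp only: poly_mapping_sum_single[symmetric])
qed

lemma mon_mult [simp]:
  "mon c a b \<odot> mon c' a' b' = mon (c + c' - 2 * b * a') (a + a') (b + b')"
  by (simp add: mon_def single_qmult_single tw_def)

lemma qmult_one_left: "qone \<odot> p = p"
proof -
  have "qone \<odot> (\<Sum>u\<in>Poly_Mapping.keys p. Poly_Mapping.single u (Poly_Mapping.lookup p u))
     = (\<Sum>u\<in>Poly_Mapping.keys p. Poly_Mapping.single u (Poly_Mapping.lookup p u))"
    by (simp add: qmult_sum_right qone_def mon_def single_qmult_single tw_def split_beta)
  then show ?thesis
    by (simp only: poly_mapping_sum_single[symmetric])
qed

lemma mon_inverse_left: "mon (- c - 2 * a * b) (- a) (- b) \<odot> mon c a b = qone"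
  by (simp add: qone_def)

lemma mon_qmult_cancel_left:
  assumes "mon c a b \<odot> p = r"
  shows "p = mon (- c - 2 * a * b) (- a) (- b) \<odot> r"
proof -
  have "p = (mon (- c - 2 * a * b) (- a) (- b) \<odot> mon c a b) \<odot> p"
    by (simp only: mon_inverse_left qmult_one_left)
  then show ?thesis
    by (simp only: qmult_assoc assms)
qed

theorem lemma3p1:
  fixes X3 X4 :: qtorus
  assumes "X1 \<odot> X3 = tpow 4 \<odot> (X2 \<odot> X2 \<odot> X2 \<odot> X2) + qone"
      and "X2 \<odot> X4 = tpow 1 \<odot> X3 + qone"
  shows "Xdelta = tpow (-2) \<odot> (X4 \<odot> X4 \<odot> X1)
                  - tpow (-4) \<odot> ((tpow (-2) \<odot> X3 + tpow (-1) + tpow 1) \<odot> (X2 \<odot> X2))"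
proof -
  have X3: "X3 = mon 4 (-1) 4 + mon 0 (-1) 0"
    using mon_qmult_cancel_left[OF assms(1)[unfolded X1_def]]
    by (simp add: tpow_def X2_def qone_def qmult_add_right)
  have X4: "X4 = mon 3 (-1) 3 + mon (-1) (-1) (-1) + mon 0 0 (-1)"
    using mon_qmult_cancel_left[OF assms(2)[unfolded X2_def]]
    by (simp add: X3 tpow_def qone_def qmult_add_right qmult_add_left)
  show ?thesis
    unfolding X3 X4
    by (simp add: Xdelta_def Xv_def tpow_def X1_def X2_def
                  qmult_add_right qmult_add_left qmult_diff_left)
qed

end
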